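(* For every measure $\mathfrak{n}\in\mathcal{R}_d$: (1) the set $\mathfrak{G}^*\setminus\mathfrak{G}(\mathfrak{n})$ is left-open; (2) the set $\mathfrak{G}(\mathfrak{n})$ is right-open and nonempty.
   Context: A gauge function is a function $g:[0,\infty]\to[0,\infty]$ that is nondecreasing on a neighbourhood of $0$ and satisfies $\lim_{r\to0}g(r)=g(0)=0$, $g(\infty)=\infty$; $\mathfrak{G}$ denotes the set of gauge functions. The $d$-normalization of $g$ is $g_d(r)=r^d\inf_{0<\rho\le r}g(\rho)/\rho^d$ for $r\in(0,\infty)$, $g_d(0)=0$, $g_d(\infty)=\infty$. Let $\ell_g=\liminf_{r\to0}g(r)/r^d$, $\mathfrak{G}^\infty=\{g\in\mathfrak{G}:\ell_g=\infty\}$, $\mathfrak{G}^*=\{g\in\mathfrak{G}:\ell_g\in(0,\infty]\}$. For $d$-normalized gauge functions $g,h$ (i.e. coinciding with their $d$-normalizations near $0$) write $h\prec g$ if $h(r)/g(r)$ increases monotonically to $\infty$ as $r\downarrow0$ (with the convention that $h\prec g$ for every $h$ if $g$ vanishes on a neighbourhood of $0$). Let $\mathcal{R}$ be the set of positive Borel measures $\mathfrak{n}$ on $(0,1]$ with infinite total mass and $\mathfrak{n}([\rho,1])<\infty$ for all $\rho\in(0,1]$, and $\mathcal{R}_d=\{\mathfrak{n}\in\mathcal{R}:\int_{(0,1]}r^d\,\mathfrak{n}(dr)<\infty\}$. For $\mathfrak{n}\in\mathcal{R}_d$, $\mathfrak{G}(\mathfrak{n})=\{g\in\mathfrak{G}^\infty:\int_{(0,1]}g_d\,d\mathfrak{n}=\infty\}$.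 A subset $\mathfrak{H}\subseteq\mathfrak{G}^*$ is $d$-normalized if for every $g\in\mathfrak{G}^*$, $g\in\mathfrak{H}$ iff $g_d\in\mathfrak{H}$; it is left-open if it is $d$-normalized and for every $g\in\mathfrak{H}$ there is $\overline g\in\mathfrak{H}$ with $\overline g_d\prec g_d$; it is right-open if it is $d$-normalized, contained in $\mathfrak{G}^\infty$, and for every $g\in\mathfrak{H}$ there is $\underline g\in\mathfrak{H}$ with $g_d\prec\underline g_d$. *)

theory Defs
  imports "HOL-Analysis.Analysis"
begin

definition gauge :: "(ennreal \<Rightarrow> ennreal) set" where
  "gauge = {g. (\<exists>\<epsilon>>0. mono_on {0..\<epsilon>} g) \<and> (g \<longlongrightarrow> 0) (at_right 0)
              \<and> g 0 = 0 \<and> g top = top}"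

definition dnorm :: "nat \<Rightarrow> (ennreal \<Rightarrow> ennreal) \<Rightarrow> ennreal \<Rightarrow> ennreal" where
  "dnorm d g r = (if r = 0 then 0 else if r = top then top
                  else r ^ d * (INF \<rho>\<in>{0<..r}. g \<rho> / \<rho> ^ d))"

definition ell :: "nat \<Rightarrow> (ennreal \<Rightarrow> ennreal) \<Rightarrow> ennreal" where
  "ell d g = Liminf (at_right 0) (\<lambda>r. g r / r ^ d)"

definition gauge_inf :: "nat \<Rightarrow> (ennreal \<Rightarrow> ennreal) set" where
  "gauge_inf d = {g \<in> gauge. ell d g = top}"

definition gauge_star :: "nat \<Rightarrow> (ennreal \<Rightarrow> ennreal) set" where
  "gauge_star d = {g \<in> gauge. ell d g > 0}"

definition gprec :: "(ennreal \<Rightarrow> ennreal) \<Rightarrow> (ennreal \<Rightarrow> ennreal) \<Rightarrow> bool" where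
  "gprec h g \<longleftrightarrow>
     (\<exists>\<epsilon>>0. \<forall>r. 0 < r \<and> r < \<epsilon> \<longrightarrow> g r = 0) \<or>
     (\<exists>\<epsilon>>0. (\<forall>r s. 0 < r \<and> r \<le> s \<and> s < \<epsilon> \<longrightarrow> h s / g s \<le> h r / g r) \<and>
            ((\<lambda>r. h r / g r) \<longlongrightarrow> top) (at_right 0))"

definition meas_R :: "real measure set" where
  "meas_R = {M. sets M = sets (restrict_space borel {0<..1}) \<and>
                emeasure M {0<..1} = \<infinity> \<and>
                (\<forall>\<rho>\<in>{0<..1}. emeasure M {\<rho>..1} < \<infinity>)}"

definition meas_Rd :: "nat \<Rightarrow> real measure set" where
  "meas_Rd d = {M \<in> meas_R. (\<integral>\<^sup>+ r. ennreal (r ^ d) \<partial>M) < \<infinity>}"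

definition gauge_n :: "nat \<Rightarrow> real measure \<Rightarrow> (ennreal \<Rightarrow> ennreal) set" where
  "gauge_n d M = {g \<in> gauge_inf d. (\<integral>\<^sup>+ r. dnorm d g (ennreal r) \<partial>M) = \<infinity>}"

definition d_normalized :: "nat \<Rightarrow> (ennreal \<Rightarrow> ennreal) set \<Rightarrow> bool" where
  "d_normalized d H \<longleftrightarrow> H \<subseteq> gauge_star d \<and>
     (\<forall>g\<in>gauge_star d. g \<in> H \<longleftrightarrow> dnorm d g \<in> H)"

definition left_open :: "nat \<Rightarrow> (ennreal \<Rightarrow> ennreal) set \<Rightarrow> bool" where
  "left_open d H \<longleftrightarrow> d_normalized d H \<and>
     (\<forall>g\<in>H. \<exists>g'\<in>H. gprec (dnorm d g') (dnorm d g))"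

definition right_open :: "nat \<Rightarrow> (ennreal \<Rightarrow> ennreal) set \<Rightarrow> bool" where
  "right_open d H \<longleftrightarrow> d_normalized d H \<and> H \<subseteq> gauge_inf d \<and>
     (\<forall>g\<in>H. \<exists>g'\<in>H. gprec (dnorm d g) (dnorm d g'))"

end

theory Submission
  imports Defs
begin

text \<open>
  Write the d-normalization as g_d(r) = r^d h(r), where h(r) is the infimum of g(\<rho>)/\<rho>^d
  over 0 < \<rho> \<le> r; h is antitone and its limit at 0 is the liminf \<ell>_g.

  Right-openness: if \<integral> r^d h dn = \<infinity>, slow h down to F(h), where
  F(y) = inf_k (y/(k+1) + a_k). Whatever the sequence a, F(y) \<rightarrow> \<infinity> while y/F(y) increases
  to \<infinity>; choosing a_K beyond a level n where \<integral> r^d min(h, n) dn exceeds K(K+1) keeps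
  \<integral> r^d F(h) dn divergent. Nonemptiness is the same construction started from h(r) = r^-d.

  Left-openness: if \<phi> = g_d is n-integrable, boost it to \<Phi>(\<phi>), where
  \<Phi>(x) = \<Sum>_k min(x, a_k). For positive a, \<Phi>(x)/x increases to \<infinity> as x \<rightarrow> 0, while choosing
  a_k so small that \<integral> min(\<phi>, a_k) dn \<le> 2^-k keeps \<Phi>(\<phi>) integrable.
\<close>

section \<open>Arithmetic and limits in ennreal\<close>

lemma ennreal_power_neq_0_top:
  fixes r :: ennreal assumes "0 < r" "r < top" shows "r ^ d \<noteq> 0" "r ^ d \<noteq> top"
  using assms by (auto simp: power_less_top_ennreal top.not_eq_extremum)

lemma ennreal_less_top_if_le_1: "x \<le> (1::ennreal) \<Longrightarrow> x < top"
  using ennreal_one_less_top by (rule le_less_trans[rotated])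

lemma ennreal_mult_divide_cancel:
  fixes a c :: ennreal assumes "c \<noteq> 0" "c \<noteq> top" shows "c * (a / c) = a"
  using assms by (simp add: ennreal_times_divide mult.commute[of c] mult_divide_eq_ennreal)

lemma ennreal_divide_le_iff:
  fixes a b c :: ennreal assumes "c \<noteq> 0" "c \<noteq> top"
  shows "a / c \<le> b \<longleftrightarrow> a \<le> b * c"
  using ennreal_mult_le_mult_iff[OF assms, of "a / c" b] ennreal_mult_divide_cancel[OF assms]
  by (simp add: mult.commute)

lemma ennreal_le_divide_iff:
  fixes a b c :: ennreal assumes "c \<noteq> 0" "c \<noteq> top"
  shows "b \<le> a / c \<longleftrightarrow> b * c \<le> a"
  using ennreal_mult_le_mult_iff[OF assms, of b "a / c"] ennreal_mult_divide_cancel[OF assms]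
  by (simp add: mult.commute)

lemma ennreal_mult_divide_mult_cancel:
  fixes c x y :: ennreal assumes "c \<noteq> 0" "c \<noteq> top" shows "(c * x) / (c * y) = x / y"
  using assms divide_mult_eq[of c x y] by (simp add: mult.commute)

lemma ennreal_divide_le_divide_cross:
  fixes a b x y :: ennreal
  assumes "x \<noteq> 0" "x \<noteq> top" "y \<noteq> 0" "y \<noteq> top" "b * x \<le> a * y"
  shows "b / y \<le> a / x"
proof -
  have "b \<le> a * y / x" using assms by (simp add: ennreal_le_divide_iff)
  also have "a * y / x = a / x * y" by (simp add: ennreal_divide_times ennreal_times_divide)
  finally show ?thesis using assms by (simp add: ennreal_divide_le_iff)
qed

lemma ennreal_divide_eq_divide_mult_divide:
  fixes a c x :: ennreal assumes "x \<noteq> 0" "x \<noteq> top" shows "a / c = (a / x) * (x / c)"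
proof -
  have "(a / x) * (x / c) = a * inverse c * (x * inverse x)" by (simp add: divide_ennreal_def ac_simps)
  also have "x * inverse x = 1" using ennreal_divide_self[of x] assms by (simp add: divide_ennreal_def less_top)
  finally show ?thesis by (simp add: divide_ennreal_def)
qed

lemma ennreal_mult_INF:
  fixes c :: ennreal assumes "c \<noteq> 0" "c \<noteq> top"
  shows "c * (INF i\<in>I. f i) = (INF i\<in>I. c * f i)"
proof (rule antisym)
  show "c * (INF i\<in>I. f i) \<le> (INF i\<in>I. c * f i)"
    by (rule INF_greatest, rule mult_left_mono) (auto intro: INF_lower)
  have "(INF i\<in>I. c * f i) / c \<le> (INF i\<in>I. f i)"
  proof (rule INF_greatest)
    fix i assume "i \<in> I"
    then have "(INF i\<in>I. c * f i) \<le> f i * c" by (metis INF_lower mult.commute)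
    then show "(INF i\<in>I. c * f i) / c \<le> f i" using ennreal_divide_le_iff[OF assms] by blast
  qed
  then show "(INF i\<in>I. c * f i) \<le> c * (INF i\<in>I. f i)"
    using ennreal_divide_le_iff[OF assms] by (simp add: mult.commute)
qed

lemma ennreal_inverse_antimono:
  fixes a b :: ennreal assumes "a \<le> b" shows "inverse b \<le> inverse a"
proof (cases "a = 0 \<or> b = top")
  case False
  then obtain a' b' where "a = ennreal a'" "b = ennreal b'" "0 < a'" "a' \<le> b'"
    using assms by (cases a; cases b) (auto simp: ennreal_le_iff top_unique)
  then show ?thesis by (simp add: inverse_ennreal le_imp_inverse_le)
qed auto

lemma suminf_le_2_if_le_half_power:
  fixes f :: "nat \<Rightarrow> ennreal" assumes "\<And>k. f k \<le> ennreal ((1/2) ^ k)" shows "(\<Sum>k. f k) \<le> 2"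
proof -
  have "(\<lambda>k. (1/2::real) ^ k) sums 2" using geometric_sums[of "1/2::real"] by simp
  then have "(\<Sum>k. ennreal ((1/2) ^ k)) = ennreal 2" by (intro suminf_ennreal_eq) simp_all
  moreover have "(\<Sum>k. f k) \<le> (\<Sum>k. ennreal ((1/2) ^ k))" using assms by (intro suminf_le summableI)
  ultimately show ?thesis by simp
qed

lemma ennreal_eq_top_if_of_nat_le:
  fixes x :: ennreal assumes "\<And>K::nat. of_nat K \<le> x" shows "x = top"
proof -
  have "(SUP K. of_nat K) \<le> x" using assms by (intro SUP_least) auto
  then show ?thesis using ennreal_SUP_of_nat_eq_top by (simp add: top_unique)
qed

lemma ennreal_eq_0_if_le_inverse_Suc:
  fixes x :: ennreal assumes "\<And>i. x \<le> ennreal (1 / real (Suc i))" shows "x = 0"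
proof (rule ccontr)
  assume "x \<noteq> 0"
  have "x < top" using assms[of 0] ennreal_one_less_top by (simp add: le_less_trans)
  then obtain t where t: "x = ennreal t" "0 < t" using \<open>x \<noteq> 0\<close> by (cases x) auto
  then obtain n :: nat where "0 < n" "inverse (real n) < t" using ex_inverse_of_nat_less by blast
  then have "1 / real (Suc n) < t" by (smt (verit) frac_le inverse_eq_divide of_nat_0_less_iff of_nat_less_iff lessI)
  moreover have "t \<le> 1 / real (Suc n)" using assms[of n] t by (simp add: ennreal_le_iff)
  ultimately show False by simp
qed

lemma SUP_min_of_nat_ennreal: "(SUP n. min y (of_nat n)) = (y::ennreal)"
proof (rule antisym)
  show "(SUP n. min y (of_nat n)) \<le> y" by (rule SUP_least) simp
  show "y \<le> (SUP n. min y (of_nat n))"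
  proof (cases "y = top")
    case True
    then show ?thesis by (simp add: ennreal_SUP_of_nat_eq_top)
  next
    case False
    then obtain t where t: "y = ennreal t" "0 \<le> t" by (cases y) auto
    obtain n :: nat where "t \<le> real n" using real_nat_ceiling_ge by blast
    then have "y \<le> min y (of_nat n)" using t by (simp add: ennreal_of_nat_eq_real_of_nat ennreal_leI)
    also have "\<dots> \<le> (SUP n. min y (of_nat n))" by (rule SUP_upper) simp
    finally show ?thesis .
  qed
qed

lemma at_right_0_ennreal_neq_bot: "at_right (0::ennreal) \<noteq> bot"
proof
  assume "at_right (0::ennreal) = bot"
  then obtain b :: ennreal where "b > 0" "\<forall>y>0. y < b \<longrightarrow> False"
    using eventually_at_right[of "0::ennreal" 1 "\<lambda>_. False"] by auto
  then show False using dense by blast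
qed

lemma eventually_at_right_0_ennreal:
  "eventually P (at_right 0) \<longleftrightarrow> (\<exists>b>0. \<forall>y::ennreal. 0 < y \<longrightarrow> y < b \<longrightarrow> P y)"
  using eventually_at_right[of "0::ennreal" 1] by auto

lemma eventually_at_right_0_less_1: "eventually (\<lambda>r::ennreal. 0 < r \<and> r < 1) (at_right 0)"
  unfolding eventually_at_right_0_ennreal by (intro exI[of _ 1]) auto

lemma tendsto_power_ennreal: "((\<lambda>r::ennreal. r ^ n) \<longlongrightarrow> x ^ n) (at x within S)"
proof (induction n)
  case (Suc n)
  show ?case unfolding power_Suc
    by (rule tendsto_mult_ennreal[OF tendsto_ident_at Suc]) (auto simp: power_eq_top_ennreal)
qed simp

lemma eventually_power_mult_less:
  fixes c t :: ennreal assumes "d \<noteq> 0" "c < top" "0 < t"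
  shows "eventually (\<lambda>r. r ^ d * c < t) (at_right 0)"
proof -
  have "((\<lambda>r::ennreal. r ^ d * c) \<longlongrightarrow> 0 ^ d * c) (at_right 0)"
    using assms by (intro tendsto_mult_ennreal tendsto_power_ennreal tendsto_const)
      (auto simp: zero_power)
  then show ?thesis using assms by (intro order_tendstoD) (auto simp: zero_power)
qed

section \<open>The d-normalization\<close>

definition inf_ratio :: "nat \<Rightarrow> (ennreal \<Rightarrow> ennreal) \<Rightarrow> ennreal \<Rightarrow> ennreal" where
  "inf_ratio d g r = (INF \<rho>\<in>{0<..r}. g \<rho> / \<rho> ^ d)"

lemma dnorm_eq_inf_ratio: "0 < r \<Longrightarrow> r < top \<Longrightarrow> dnorm d g r = r ^ d * inf_ratio d g r"
  by (auto simp: dnorm_def inf_ratio_def)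

lemma dnorm_zero [simp]: "dnorm d g 0 = 0" and dnorm_top [simp]: "dnorm d g top = top"
  by (auto simp: dnorm_def)

lemma inf_ratio_antimono: "r \<le> s \<Longrightarrow> inf_ratio d g s \<le> inf_ratio d g r"
  unfolding inf_ratio_def by (rule INF_superset_mono) auto

lemma inf_ratio_le: "0 < \<rho> \<Longrightarrow> \<rho> \<le> r \<Longrightarrow> inf_ratio d g r \<le> g \<rho> / \<rho> ^ d"
  unfolding inf_ratio_def by (rule INF_lower) auto

lemma dnorm_divide_power: "0 < r \<Longrightarrow> r < top \<Longrightarrow> dnorm d g r / r ^ d = inf_ratio d g r"
  using dnorm_eq_inf_ratio[of r d g] ennreal_power_neq_0_top[of r d]
    ennreal_mult_divide_eq[of "r ^ d" "inf_ratio d g r"]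
  by (simp add: mult.commute)

lemma dnorm_le: assumes "0 < r" "r < top" shows "dnorm d g r \<le> g r"
proof -
  have "dnorm d g r = r ^ d * inf_ratio d g r" using dnorm_eq_inf_ratio assms by blast
  also have "\<dots> \<le> r ^ d * (g r / r ^ d)" by (rule mult_left_mono) (use inf_ratio_le assms in auto)
  also have "\<dots> = g r" using ennreal_mult_divide_cancel ennreal_power_neq_0_top assms by blast
  finally show ?thesis .
qed

lemma dnorm_eq_self:
  assumes "0 < r" "r < top" "\<And>\<rho>. 0 < \<rho> \<Longrightarrow> \<rho> \<le> r \<Longrightarrow> g r / r ^ d \<le> g \<rho> / \<rho> ^ d"
  shows "dnorm d g r = g r"
proof -
  have "inf_ratio d g r = g r / r ^ d"
    using assms unfolding inf_ratio_def by (intro antisym INF_lower INF_greatest) auto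
  then show ?thesis
    using dnorm_eq_inf_ratio ennreal_mult_divide_cancel ennreal_power_neq_0_top assms by metis
qed

lemma dnorm_idem: "dnorm d (dnorm d g) = dnorm d g"
proof
  fix r :: ennreal
  show "dnorm d (dnorm d g) r = dnorm d g r"
  proof (cases "r = 0 \<or> r = top")
    case False
    then have r: "0 < r" "r < top" by (auto simp: top.not_eq_extremum zero_less_iff_neq_zero)
    show ?thesis
      by (rule dnorm_eq_self[OF r]) (use r in \<open>simp add: dnorm_divide_power inf_ratio_antimono\<close>)
  qed auto
qed

lemma eventually_less_inf_ratio:
  assumes "y < ell d g" shows "\<exists>b>0. \<forall>r. 0 < r \<longrightarrow> r < b \<longrightarrow> y < inf_ratio d g r"
proof -
  obtain z where "y < z" "z < ell d g" using dense assms by blast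
  then have "eventually (\<lambda>r. z < g r / r ^ d) (at_right 0)"
    using le_Liminf_iff[of "ell d g" "at_right 0" "\<lambda>r. g r / r ^ d"] unfolding ell_def by auto
  then obtain b where b: "b > 0" "\<And>r. 0 < r \<Longrightarrow> r < b \<Longrightarrow> z < g r / r ^ d"
    unfolding eventually_at_right_0_ennreal by blast
  have "z \<le> inf_ratio d g r" if "0 < r" "r < b" for r
    unfolding inf_ratio_def using b that by (intro INF_greatest) (auto intro!: less_imp_le)
  then show ?thesis using b \<open>y < z\<close> by (meson order.strict_trans2)
qed

lemma inf_ratio_le_ell: assumes "0 < r" shows "inf_ratio d g r \<le> ell d g"
  unfolding ell_def le_Liminf_iff
proof (intro allI impI)
  fix y assume y: "y < inf_ratio d g r"
  have "y < g x / x ^ d" if "0 < x" "x < r" for x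
    using y inf_ratio_le[of x r d g] that by (auto intro: order.strict_trans2)
  then show "\<forall>\<^sub>F x in at_right 0. y < g x / x ^ d"
    unfolding eventually_at_right_0_ennreal using assms by blast
qed

lemma ell_dnorm: "ell d (dnorm d g) = ell d g"
proof -
  have "ell d (dnorm d g) = Liminf (at_right 0) (inf_ratio d g)"
    unfolding ell_def
  proof (rule Liminf_eq)
    show "\<forall>\<^sub>F x in at_right 0. dnorm d g x / x ^ d = inf_ratio d g x"
      using eventually_at_right_0_less_1
      by eventually_elim (auto intro!: dnorm_divide_power dest: order.strict_trans[OF _ ennreal_one_less_top])
  qed
  also have "\<dots> = ell d g"
  proof (rule antisym)
    show "Liminf (at_right 0) (inf_ratio d g) \<le> ell d g"
      unfolding ell_def
      by (rule Liminf_mono) (auto simp: eventually_at_right_0_ennreal intro!: exI[of _ 1] inf_ratio_le)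
    show "ell d g \<le> Liminf (at_right 0) (inf_ratio d g)"
      unfolding le_Liminf_iff eventually_at_right_0_ennreal using eventually_less_inf_ratio by blast
  qed
  finally show ?thesis .
qed

lemma inf_ratio_tendsto_top:
  assumes "ell d g = top" shows "(inf_ratio d g \<longlongrightarrow> top) (at_right 0)"
  unfolding order_tendsto_iff
proof (intro conjI allI impI)
  fix y :: ennreal assume "y < top"
  then show "\<forall>\<^sub>F x in at_right 0. y < inf_ratio d g x"
    unfolding eventually_at_right_0_ennreal using eventually_less_inf_ratio[of y d g] assms by auto
qed (auto simp: top.not_eq_extremum)

lemma dnorm_mono:
  assumes mono: "mono_on {0..\<epsilon>} g" and "0 < r" "r \<le> s" "s \<le> \<epsilon>" "s < top"
  shows "dnorm d g r \<le> dnorm d g s"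
proof -
  have r: "0 < r" "r < top" and s: "0 < s" "s < top" using assms by auto
  have "r ^ d * inf_ratio d g r \<le> s ^ d * (g \<rho> / \<rho> ^ d)" if \<rho>: "\<rho> \<in> {0<..s}" for \<rho>
  proof (cases "\<rho> \<le> r")
    case True
    then have "r ^ d * inf_ratio d g r \<le> r ^ d * (g \<rho> / \<rho> ^ d)"
      using \<rho> by (intro mult_left_mono inf_ratio_le) auto
    also have "\<dots> \<le> s ^ d * (g \<rho> / \<rho> ^ d)" using assms by (intro mult_right_mono power_mono) auto
    finally show ?thesis .
  next
    case False
    have "r ^ d * inf_ratio d g r = dnorm d g r" using dnorm_eq_inf_ratio r by metis
    also have "\<dots> \<le> g r" using dnorm_le r by blast
    also have "\<dots> \<le> g \<rho>" using False \<rho> assms by (intro mono_onD[OF mono]) auto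
    also have "\<dots> = \<rho> ^ d * (g \<rho> / \<rho> ^ d)" using ennreal_power_neq_0_top[of \<rho> d] \<rho> s
      by (intro ennreal_mult_divide_cancel[symmetric]) (auto dest: order.strict_trans1[of \<rho> s top])
    also have "\<dots> \<le> s ^ d * (g \<rho> / \<rho> ^ d)" using \<rho> by (intro mult_right_mono power_mono) auto
    finally show ?thesis .
  qed
  then have "r ^ d * inf_ratio d g r \<le> (INF \<rho>\<in>{0<..s}. s ^ d * (g \<rho> / \<rho> ^ d))"
    by (rule INF_greatest)
  also have "\<dots> = s ^ d * inf_ratio d g s" unfolding inf_ratio_def using ennreal_power_neq_0_top[OF s]
    by (intro ennreal_mult_INF[symmetric]) auto
  finally show ?thesis using dnorm_eq_inf_ratio r s by metis
qed

lemma gauge_mono_on_min_1: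
  assumes "g \<in> gauge" obtains e where "0 < e" "e \<le> 1" "mono_on {0..e} g"
proof -
  obtain \<epsilon> where "\<epsilon> > 0" "mono_on {0..\<epsilon>} g" using assms unfolding gauge_def by auto
  then show ?thesis
    by (intro that[of "min \<epsilon> 1"]) (auto elim!: mono_on_subset)
qed

lemma dnorm_in_gauge: assumes "g \<in> gauge" shows "dnorm d g \<in> gauge"
proof -
  obtain e where e: "0 < e" "e \<le> 1" "mono_on {0..e} g" using gauge_mono_on_min_1[OF assms] .
  have "e < top" using e(2) ennreal_one_less_top by (rule order.strict_trans1)
  then have "mono_on {0..e} (dnorm d g)"
  proof (intro mono_onI)
    fix r s assume "r \<in> {0..e}" "s \<in> {0..e}" "r \<le> s"
    then show "dnorm d g r \<le> dnorm d g s"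
      using \<open>e < top\<close> by (cases "r = 0") (auto simp: zero_less_iff_neq_zero intro: dnorm_mono[OF e(3)])
  qed
  moreover have "(dnorm d g \<longlongrightarrow> 0) (at_right 0)"
  proof (rule tendsto_sandwich[OF _ _ tendsto_const])
    show "\<forall>\<^sub>F n in at_right 0. 0 \<le> dnorm d g n" by simp
    show "\<forall>\<^sub>F n in at_right 0. dnorm d g n \<le> g n"
      using eventually_at_right_0_less_1
      by eventually_elim (auto intro!: dnorm_le dest: order.strict_trans[OF _ ennreal_one_less_top])
    show "(g \<longlongrightarrow> 0) (at_right 0)" using assms by (simp add: gauge_def)
  qed
  ultimately show ?thesis using e unfolding gauge_def by auto
qed

lemma dnorm_mono_near_0:
  assumes "g \<in> gauge" obtains e where "0 < e" "e \<le> 1" "mono_on {0..e} (dnorm d g)"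
  using gauge_mono_on_min_1[OF dnorm_in_gauge[OF assms]] .

lemma gauge_less_1_near_0:
  assumes "g \<in> gauge" obtains b where "0 < b" "b \<le> 1" "\<And>r. 0 < r \<Longrightarrow> r < b \<Longrightarrow> g r < 1"
proof -
  have "(g \<longlongrightarrow> 0) (at_right 0)" using assms by (simp add: gauge_def)
  then have "eventually (\<lambda>r. g r < 1) (at_right 0)" by (rule order_tendstoD) simp
  then obtain b where "0 < b" "\<And>r. 0 < r \<Longrightarrow> r < b \<Longrightarrow> g r < 1"
    unfolding eventually_at_right_0_ennreal by blast
  then show ?thesis by (intro that[of "min b 1"]) auto
qed

lemma inf_ratio_less_top_near_0:
  assumes "g \<in> gauge"
  obtains b where "0 < b" "b \<le> 1" "\<And>r. 0 < r \<Longrightarrow> r < b \<Longrightarrow> inf_ratio d g r < top"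
proof -
  obtain b where b: "0 < b" "b \<le> 1" "\<And>r. 0 < r \<Longrightarrow> r < b \<Longrightarrow> g r < 1"
    using gauge_less_1_near_0[OF assms] by blast
  have "inf_ratio d g r < top" if r: "0 < r" "r < b" for r
  proof -
    have r_top: "r < top" using less_imp_le[OF less_le_trans[OF r(2) b(2)]] by (rule ennreal_less_top_if_le_1)
    have "g r < top" using less_imp_le[OF b(3)[OF r]] by (rule ennreal_less_top_if_le_1)
    then have "g r / r ^ d \<noteq> top" using ennreal_power_neq_0_top[OF r(1) r_top, of d]
      by (simp add: ennreal_divide_eq_top_iff)
    moreover have "inf_ratio d g r \<le> g r / r ^ d" using r(1) by (rule inf_ratio_le) simp
    ultimately show ?thesis by (simp add: le_less_trans less_top)
  qed
  then show ?thesis using b(1,2) that by blast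
qed

lemma dnorm_pos_finite_near_0:
  assumes "g \<in> gauge_star d"
  obtains e where "0 < e" "e \<le> 1" "mono_on {0..e} (dnorm d g)"
    "\<And>r. 0 < r \<Longrightarrow> r < e \<Longrightarrow> 0 < dnorm d g r \<and> dnorm d g r < top"
proof -
  have g: "g \<in> gauge" "0 < ell d g" using assms by (auto simp: gauge_star_def)
  obtain e1 where e1: "0 < e1" "e1 \<le> 1" "mono_on {0..e1} (dnorm d g)"
    using dnorm_mono_near_0[OF g(1)] by blast
  obtain e2 where e2: "0 < e2" "e2 \<le> 1" "\<And>r. 0 < r \<Longrightarrow> r < e2 \<Longrightarrow> dnorm d g r < 1"
    using gauge_less_1_near_0[OF dnorm_in_gauge[OF g(1), of d]] by blast
  obtain e3 where e3: "0 < e3" "\<And>r. 0 < r \<Longrightarrow> r < e3 \<Longrightarrow> 0 < inf_ratio d g r"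
    using eventually_less_inf_ratio[OF g(2)] by blast
  define e where "e = min e1 (min e2 e3)"
  have e: "e \<le> e1" "e \<le> e2" "e \<le> e3" by (simp_all add: e_def min.coboundedI2)
  have "0 < e" using e1(1) e2(1) e3(1) unfolding e_def min_less_iff_conj by blast
  moreover have "e \<le> 1" using e(1) e1(2) by (rule order.trans)
  ultimately have e: "0 < e" "e \<le> 1" "e \<le> e1" "e \<le> e2" "e \<le> e3" using e by blast+
  show ?thesis
  proof (rule that)
    show "0 < e" "e \<le> 1" by (fact e)+
    show "mono_on {0..e} (dnorm d g)" using e1(3) by (rule mono_on_subset) (use e(3) in simp)
    fix r assume r: "0 < r" "r < e"
    have r_top: "r < top" using less_imp_le[OF less_le_trans[OF r(2) e(2)]] by (rule ennreal_less_top_if_le_1)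
    have "0 < inf_ratio d g r" using r(1) less_le_trans[OF r(2) e(5)] by (rule e3(2))
    moreover have "0 < r ^ d"
      using ennreal_power_neq_0_top(1)[OF r(1) r_top] by (rule zero_less_iff_neq_zero[THEN iffD2])
    ultimately have "0 < dnorm d g r"
      unfolding dnorm_eq_inf_ratio[OF r(1) r_top] by (intro ennreal_zero_less_mult_iff[THEN iffD2] conjI)
    moreover have "dnorm d g r < 1" using r(1) less_le_trans[OF r(2) e(4)] by (rule e2(3))
    then have "dnorm d g r < top" by (intro ennreal_less_top_if_le_1 less_imp_le)
    ultimately show "0 < dnorm d g r \<and> dnorm d g r < top" ..
  qed
qed

lemma dnorm_in_gauge_star: "g \<in> gauge_star d \<Longrightarrow> dnorm d g \<in> gauge_star d"
  by (auto simp: gauge_star_def dnorm_in_gauge ell_dnorm)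

lemma dnorm_in_gauge_n_iff: "g \<in> gauge \<Longrightarrow> dnorm d g \<in> gauge_n d M \<longleftrightarrow> g \<in> gauge_n d M"
  by (auto simp: gauge_n_def gauge_inf_def dnorm_in_gauge ell_dnorm dnorm_idem)

lemma gauge_n_subset_gauge_inf: "gauge_n d M \<subseteq> gauge_inf d"
  by (auto simp: gauge_n_def)

lemma d_normalized_gauge_n: "d_normalized d (gauge_n d M)"
  unfolding d_normalized_def using dnorm_in_gauge_n_iff
  by (auto simp: gauge_star_def gauge_n_def gauge_inf_def)

lemma d_normalized_gauge_star_diff_gauge_n: "d_normalized d (gauge_star d - gauge_n d M)"
  unfolding d_normalized_def using dnorm_in_gauge_n_iff dnorm_in_gauge_star
  by (auto simp: gauge_star_def)

lemma gprecI:
  assumes "(\<epsilon>::ennreal) > 0"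
    and "\<And>r s. 0 < r \<Longrightarrow> r \<le> s \<Longrightarrow> s < \<epsilon> \<Longrightarrow> H s / G s \<le> H r / G r"
    and "((\<lambda>r. H r / G r) \<longlongrightarrow> top) (at_right 0)"
  shows "gprec H G"
  unfolding gprec_def using assms by blast

section \<open>Measures in the class R_d\<close>

lemma down_closed_in_sets_borel:
  fixes S :: "real set" assumes down: "\<And>x y. y \<in> S \<Longrightarrow> x \<le> y \<Longrightarrow> x \<in> S"
  shows "S \<in> sets borel"
proof (cases "S = {} \<or> \<not> bdd_above S")
  case True
  moreover have "S = UNIV" if unbounded: "\<not> bdd_above S"
  proof safe
    fix x
    obtain y where "y \<in> S" "x < y" using unbounded unfolding bdd_above_def by (meson not_le)
    then show "x \<in> S" using down by auto
  qed simp
  ultimately show ?thesis by auto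
next
  case False
  then have ne: "S \<noteq> {}" and bdd: "bdd_above S" by auto
  have "\<exists>c. S = {..c} \<or> S = {..<c}"
  proof (cases "Sup S \<in> S")
    case True
    then have "S = {..Sup S}" using down cSup_upper[OF _ bdd] by auto
    then show ?thesis by blast
  next
    case False
    have "x \<in> S" if "x < Sup S" for x
      using that less_cSup_iff[OF ne bdd] down by (meson less_imp_le)
    then have "S = {..<Sup S}" using False cSup_upper[OF _ bdd] by (auto simp: order_less_le)
    then show ?thesis by blast
  qed
  then show ?thesis by auto
qed

lemma borel_measurable_antimono_ennreal:
  fixes h :: "ennreal \<Rightarrow> ennreal" assumes "\<And>x y. x \<le> y \<Longrightarrow> h y \<le> h x"
  shows "(\<lambda>r. h (ennreal r)) \<in> borel_measurable borel"
proof (rule borel_measurableI_greater)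
  fix y
  have "{x. y < h (ennreal x)} \<in> sets borel"
    by (rule down_closed_in_sets_borel) (use assms ennreal_leI in \<open>blast intro: less_le_trans\<close>)
  then show "{x \<in> space borel. y < h (ennreal x)} \<in> sets borel" by simp
qed

lemma nn_integral_min_inverse_Suc_INF:
  assumes [measurable]: "f \<in> borel_measurable M" and "(\<integral>\<^sup>+ x. f x \<partial>M) < \<infinity>"
  shows "(INF i. \<integral>\<^sup>+ x. min (f x) (ennreal (1 / real (Suc i))) \<partial>M) = 0"
proof -
  define F where "F = (\<lambda>i x. min (f x) (ennreal (1 / real (Suc i))))"
  have [measurable]: "F i \<in> borel_measurable M" for i unfolding F_def by measurable
  have lim: "(INF i. F i x) = 0" for x
  proof (rule ennreal_eq_0_if_le_inverse_Suc)
    fix i show "(INF i. F i x) \<le> ennreal (1 / real (Suc i))"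
      unfolding F_def by (rule INF_lower2[of i]) auto
  qed
  have "(INF i. integral\<^sup>N M (F i)) = (\<integral>\<^sup>+ x. (INF i. F i x) \<partial>M)"
  proof (rule nn_integral_monotone_convergence_INF_AE'[symmetric])
    show "AE x in M. F (Suc i) x \<le> F i x" for i
      unfolding F_def by (intro AE_I2 min.mono ennreal_leI order_refl divide_left_mono) auto
    show "integral\<^sup>N M (F 0) < \<infinity>"
      using assms(2) unfolding F_def by (rule le_less_trans[rotated]) (intro nn_integral_mono; simp)
  qed simp
  then have "(INF i. integral\<^sup>N M (F i)) = 0" by (simp add: lim)
  then show ?thesis unfolding F_def .
qed

locale Rd_measure =
  fixes d :: nat and M :: "real measure"
  assumes in_meas_Rd: "M \<in> meas_Rd d"
begin

lemma sets_M: "sets M = sets (restrict_space borel {0<..1})"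
  using in_meas_Rd by (auto simp: meas_Rd_def meas_R_def)

lemma space_M: "space M = {0<..1}"
  using sets_eq_imp_space_eq[OF sets_M] by (simp add: space_restrict_space)

lemma emeasure_space_M: "emeasure M (space M) = \<infinity>"
  using in_meas_Rd by (auto simp: meas_Rd_def meas_R_def space_M)

lemma borel_measurable_M: "f \<in> borel_measurable borel \<Longrightarrow> f \<in> borel_measurable M"
  using measurable_cong_sets[OF sets_M refl] measurable_restrict_space1 by blast

lemma nn_integral_power_finite: "(\<integral>\<^sup>+ r. ennreal r ^ d \<partial>M) < \<infinity>"
proof -
  have "(\<integral>\<^sup>+ r. ennreal r ^ d \<partial>M) = (\<integral>\<^sup>+ r. ennreal (r ^ d) \<partial>M)"
    by (rule nn_integral_cong) (auto simp: space_M ennreal_power)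
  then show ?thesis using in_meas_Rd by (simp add: meas_Rd_def)
qed

lemma d_neq_0: "d \<noteq> 0"
proof
  assume "d = 0"
  then show False using nn_integral_power_finite emeasure_space_M by simp
qed

lemma borel_measurable_power [measurable]: "(\<lambda>r. ennreal r ^ d) \<in> borel_measurable M"
  by (intro borel_measurable_M) measurable

lemma nn_integral_dnorm_eq:
  "(\<integral>\<^sup>+ r. dnorm d g (ennreal r) \<partial>M) = (\<integral>\<^sup>+ r. ennreal r ^ d * inf_ratio d g (ennreal r) \<partial>M)"
  by (rule nn_integral_cong) (auto simp: space_M dnorm_eq_inf_ratio)

lemma borel_measurable_dnorm [measurable]: "(\<lambda>r. dnorm d g (ennreal r)) \<in> borel_measurable M"
proof -
  have "(\<lambda>r. inf_ratio d g (ennreal r)) \<in> borel_measurable M"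
    by (intro borel_measurable_M borel_measurable_antimono_ennreal inf_ratio_antimono)
  then have "(\<lambda>r. ennreal r ^ d * inf_ratio d g (ennreal r)) \<in> borel_measurable M" by measurable
  then show ?thesis
    by (rule measurable_cong[THEN iffD1, rotated]) (auto simp: space_M dnorm_eq_inf_ratio)
qed

end

section \<open>Slowing down a gauge: right-openness of G(n)\<close>

definition sublin :: "(nat \<Rightarrow> real) \<Rightarrow> ennreal \<Rightarrow> ennreal" where
  "sublin a y = (INF k. y * ennreal (1 / real (Suc k)) + ennreal (a k))"

definition growing_seq :: "(nat \<Rightarrow> real) \<Rightarrow> bool" where
  "growing_seq a \<longleftrightarrow> mono a \<and> (\<forall>k. real (Suc k) \<le> a k)"

lemma sublin_le: "sublin a y \<le> y * ennreal (1 / real (Suc K)) + ennreal (a K)"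
  unfolding sublin_def by (rule INF_lower) auto

lemma sublin_mono: assumes "y \<le> y'" shows "sublin a y \<le> sublin a y'"
  unfolding sublin_def[of a y']
proof (rule INF_greatest)
  fix k
  have "sublin a y \<le> y * ennreal (1 / real (Suc k)) + ennreal (a k)" by (rule sublin_le)
  also have "\<dots> \<le> y' * ennreal (1 / real (Suc k)) + ennreal (a k)"
    using assms by (intro add_right_mono mult_right_mono) auto
  finally show "sublin a y \<le> y' * ennreal (1 / real (Suc k)) + ennreal (a k)" .
qed

lemma one_le_sublin: assumes "growing_seq a" shows "1 \<le> sublin a y"
  unfolding sublin_def
proof (rule INF_greatest)
  fix k
  have "real (Suc k) \<le> a k" using assms unfolding growing_seq_def by blast
  then have "1 \<le> a k" by simp
  then have "(1::ennreal) \<le> ennreal (a k)" using ennreal_leI[of 1 "a k"] by simp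
  also have "\<dots> \<le> y * ennreal (1 / real (Suc k)) + ennreal (a k)" by simp
  finally show "1 \<le> y * ennreal (1 / real (Suc k)) + ennreal (a k)" .
qed

lemma sublin_less_top: assumes "y < top" shows "sublin a y < top"
proof -
  have "sublin a y \<le> y * ennreal (1 / real (Suc 0)) + ennreal (a 0)" by (rule sublin_le)
  also have "\<dots> = y + ennreal (a 0)" by simp
  also have "\<dots> < top" using assms by (simp add: ennreal_add_less_top)
  finally show ?thesis .
qed

lemma min_le_sublin: assumes "growing_seq a"
  shows "min (y * ennreal (1 / real (Suc K))) (ennreal (a K)) \<le> sublin a y"
  unfolding sublin_def
proof (rule INF_greatest)
  fix k
  show "min (y * ennreal (1 / real (Suc K))) (ennreal (a K)) \<le> y * ennreal (1 / real (Suc k)) + ennreal (a k)"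
  proof (cases "k \<le> K")
    case True
    have "y * ennreal (1 / real (Suc K)) \<le> y * ennreal (1 / real (Suc k))"
      using True by (intro mult_left_mono ennreal_leI) (auto simp: frac_le)
    also have "\<dots> \<le> y * ennreal (1 / real (Suc k)) + ennreal (a k)" by simp
    finally show ?thesis by (simp add: min.coboundedI1)
  next
    case False
    have "ennreal (a K) \<le> ennreal (a k)" using False assms unfolding growing_seq_def
      by (intro ennreal_leI) (simp add: monoD)
    also have "\<dots> \<le> y * ennreal (1 / real (Suc k)) + ennreal (a k)" by simp
    finally show ?thesis by (simp add: min.coboundedI2)
  qed
qed

lemma mult_sublin_mono:
  assumes "c \<le> c'" "c' < top" "c * y \<le> c' * y'"
  shows "c * sublin a y \<le> c' * sublin a y'"
proof (cases "c' = 0")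
  case True then show ?thesis using assms by simp
next
  case False
  have "c * sublin a y \<le> (INF k. c' * (y' * ennreal (1 / real (Suc k)) + ennreal (a k)))"
  proof (rule INF_greatest)
    fix k
    have "c * sublin a y \<le> c * (y * ennreal (1 / real (Suc k)) + ennreal (a k))"
      by (intro mult_left_mono sublin_le) auto
    also have "\<dots> = (c * y) * ennreal (1 / real (Suc k)) + c * ennreal (a k)"
      by (simp add: distrib_left mult.assoc)
    also have "\<dots> \<le> (c' * y') * ennreal (1 / real (Suc k)) + c' * ennreal (a k)"
      using assms by (intro add_mono mult_right_mono) auto
    also have "\<dots> = c' * (y' * ennreal (1 / real (Suc k)) + ennreal (a k))"
      by (simp add: distrib_left mult.assoc)
    finally show "c * sublin a y \<le> c' * (y' * ennreal (1 / real (Suc k)) + ennreal (a k))" .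
  qed
  also have "\<dots> = c' * sublin a y'" unfolding sublin_def using False assms
    by (intro ennreal_mult_INF[symmetric]) auto
  finally show ?thesis .
qed

lemma sublin_cross_le: assumes "y' \<le> y" "y < top" shows "y' * sublin a y \<le> y * sublin a y'"
  using assms by (intro mult_sublin_mono) (auto simp: mult.commute)

lemma sublin_tendsto_top: assumes "growing_seq a" "(h \<longlongrightarrow> top) F" shows "((\<lambda>x. sublin a (h x)) \<longlongrightarrow> top) F"
  unfolding tendsto_top_iff_ennreal
proof (intro allI impI)
  fix l :: real assume "0 \<le> l"
  obtain N :: nat where N: "l < real N" using reals_Archimedean2 by blast
  have "eventually (\<lambda>x. ennreal (real N * real (Suc N)) < h x) F"
    using assms(2) unfolding tendsto_top_iff_ennreal by auto
  then show "eventually (\<lambda>x. ennreal l < sublin a (h x)) F"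
  proof eventually_elim
    case (elim x)
    have "ennreal l < ennreal (real N)" using N \<open>0 \<le> l\<close> by (simp add: ennreal_less_iff)
    also have "ennreal (real N) \<le> min (h x * ennreal (1 / real (Suc N))) (ennreal (a N))"
    proof (rule min.boundedI)
      have "ennreal (real N) = ennreal (real N * real (Suc N)) * ennreal (1 / real (Suc N))"
        by (simp add: ennreal_mult[symmetric])
      also have "\<dots> \<le> h x * ennreal (1 / real (Suc N))"
        using elim by (intro mult_right_mono) auto
      finally show "ennreal (real N) \<le> h x * ennreal (1 / real (Suc N))" .
      show "ennreal (real N) \<le> ennreal (a N)" using assms(1) unfolding growing_seq_def
        by (intro ennreal_leI) (metis of_nat_Suc of_nat_le_iff le_add2 plus_1_eq_Suc order_trans)
    qed
    also have "\<dots> \<le> sublin a (h x)" by (rule min_le_sublin[OF assms(1)])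
    finally show ?case by simp
  qed
qed

text \<open>For y \<ge> (K+1) a_K one has F(y) \<le> 2y/(K+1); take K = 2N + 1.\<close>

lemma divide_sublin_eventually_ge: assumes "growing_seq a"
  shows "\<exists>Y::real. \<forall>y. ennreal Y \<le> y \<longrightarrow> y < top \<longrightarrow> of_nat N \<le> y / sublin a y"
proof -
  define K where "K = 2 * N + 1"
  define Y where "Y = real (Suc K) * a K"
  have aK: "0 \<le> a K" using assms unfolding growing_seq_def by (meson of_nat_0_le_iff order_trans)
  show ?thesis
  proof (intro exI[of _ Y] allI impI)
    fix y :: ennreal assume y: "ennreal Y \<le> y" "y < top"
    obtain t where t: "y = ennreal t" "0 \<le> t" using y by (cases y) auto
    have tY: "Y \<le> t" using y t by (simp add: ennreal_le_iff)
    have F0: "sublin a y \<noteq> 0" using one_le_sublin[OF assms, of y] by auto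
    have Ft: "sublin a y \<noteq> top" using sublin_less_top[of y a] y by auto
    have "of_nat N * sublin a y \<le> of_nat N * (y * ennreal (1 / real (Suc K)) + ennreal (a K))"
      by (intro mult_left_mono sublin_le) auto
    also have "\<dots> = ennreal (real N * (t / real (Suc K) + a K))"
    proof -
      have e1: "y * ennreal (1/real(Suc K)) = ennreal (t / real (Suc K))"
        using t by (simp add: ennreal_mult[symmetric])
      have e2: "ennreal (t / real (Suc K)) + ennreal (a K) = ennreal (t / real (Suc K) + a K)"
        using t aK by (simp add: ennreal_plus)
      have e3: "(of_nat N::ennreal) * ennreal (t / real (Suc K) + a K) = ennreal (real N * (t / real (Suc K) + a K))"
        using t aK by (simp add: ennreal_mult ennreal_of_nat_eq_real_of_nat)
      show ?thesis using e1 e2 e3 by simp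
    qed
    also have "\<dots> \<le> ennreal t"
    proof (rule ennreal_leI)
      have "a K \<le> t / real (Suc K)" using tY by (simp add: Y_def field_simps)
      then have "real N * (t / real (Suc K) + a K) \<le> real N * (2 * (t / real (Suc K)))"
        by (intro mult_left_mono) auto
      also have "\<dots> = t * (2 * real N / real (Suc K))" by simp
      also have "\<dots> \<le> t * 1" using t by (intro mult_left_mono) (auto simp: K_def)
      finally show "real N * (t / real (Suc K) + a K) \<le> t" by simp
    qed
    finally show "of_nat N \<le> y / sublin a y" using t ennreal_le_divide_iff[OF F0 Ft] by (simp add: mult.commute)
  qed
qed

lemma divide_sublin_mono:
  assumes a: "growing_seq a" and "y' \<le> y" "y < top"
  shows "y' / sublin a y' \<le> y / sublin a y"
proof (rule ennreal_divide_le_divide_cross)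
  show "sublin a y \<noteq> 0" "sublin a y' \<noteq> 0"
    using one_le_sublin[OF a] by (metis not_one_le_zero)+
  show "sublin a y \<noteq> top" "sublin a y' \<noteq> top"
    using sublin_less_top[OF assms(3), of a] sublin_less_top[OF le_less_trans[OF assms(2,3)], of a] by auto
  show "y' * sublin a y \<le> y * sublin a y'" using assms(2,3) by (rule sublin_cross_le)
qed

lemma divide_sublin_tendsto_top: assumes "growing_seq a" "(h \<longlongrightarrow> top) F" "eventually (\<lambda>x. h x < top) F"
  shows "((\<lambda>x. h x / sublin a (h x)) \<longlongrightarrow> top) F"
  unfolding tendsto_top_iff_ennreal
proof (intro allI impI)
  fix l :: real assume "0 \<le> l"
  obtain N :: nat where N: "l < real N" using reals_Archimedean2 by blast
  obtain Y where Y: "\<forall>y. ennreal Y \<le> y \<longrightarrow> y < top \<longrightarrow> of_nat N \<le> y / sublin a y"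
    using divide_sublin_eventually_ge[OF assms(1)] by blast
  have "eventually (\<lambda>x. ennreal Y < h x) F" using assms(2) unfolding tendsto_top_iff_ennreal
    by (cases "0 \<le> Y") (auto elim: eventually_mono simp: ennreal_neg)
  with assms(3) show "eventually (\<lambda>x. ennreal l < h x / sublin a (h x)) F"
  proof eventually_elim
    case (elim x)
    have "ennreal l < of_nat N" using N \<open>0 \<le> l\<close> by (simp add: ennreal_of_nat_eq_real_of_nat ennreal_less_iff)
    also have "\<dots> \<le> h x / sublin a (h x)" using Y elim by auto
    finally show ?case .
  qed
qed

lemma truncation_le_sublin:
  assumes "growing_seq a" "real n \<le> a K"
  shows "ennreal (1 / real (Suc K)) * min y (of_nat n) \<le> sublin a y"
proof -
  let ?e = "ennreal (1 / real (Suc K))"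
  have "?e * min y (of_nat n) \<le> min (y * ?e) (ennreal (a K))"
  proof (rule min.boundedI)
    show "?e * min y (of_nat n) \<le> y * ?e" by (simp add: mult.commute mult_right_mono)
    have "?e * min y (of_nat n) \<le> 1 * of_nat n" by (intro mult_mono) (auto intro: ennreal_leI)
    also have "\<dots> \<le> ennreal (a K)" using assms(2) by (simp add: ennreal_of_nat_eq_real_of_nat ennreal_leI)
    finally show "?e * min y (of_nat n) \<le> ennreal (a K)" .
  qed
  also have "\<dots> \<le> sublin a y" by (rule min_le_sublin[OF assms(1)])
  finally show ?thesis .
qed

lemma growing_seq_above: "\<exists>a. growing_seq a \<and> (\<forall>K. real (f K) \<le> a K)"
proof (intro exI conjI allI)
  define a where "a K = real (Suc K) + (\<Sum>j\<le>K. real (f j))" for K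
  show "growing_seq a"
    unfolding growing_seq_def a_def by (auto intro!: monoI add_mono sum_mono2 simp: sum_nonneg)
  show "real (f K) \<le> a K" for K
    using member_le_sum[of K "{..K}" "\<lambda>j. real (f j)"] by (simp add: a_def)
qed

definition slow_gauge :: "nat \<Rightarrow> (nat \<Rightarrow> real) \<Rightarrow> (ennreal \<Rightarrow> ennreal) \<Rightarrow> ennreal \<Rightarrow> ennreal" where
  "slow_gauge d a h r = (if r = 0 then 0 else if r = top then top else r ^ d * sublin a (h r))"

lemma slow_gauge_divide_power:
  fixes r :: ennreal assumes "0 < r" "r < top" shows "slow_gauge d a h r / r ^ d = sublin a (h r)"
  using assms ennreal_mult_divide_eq[of "r ^ d" "sublin a (h r)"] ennreal_power_neq_0_top[OF assms]
  by (auto simp: slow_gauge_def mult.commute)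

lemma dnorm_slow_gauge:
  assumes "0 < r" "r < top" and anti: "\<And>x y. x \<le> y \<Longrightarrow> h y \<le> h x"
  shows "dnorm d (slow_gauge d a h) r = r ^ d * sublin a (h r)"
proof -
  have "dnorm d (slow_gauge d a h) r = slow_gauge d a h r"
  proof (rule dnorm_eq_self[OF assms(1,2)])
    fix \<rho> :: ennreal assume \<rho>: "0 < \<rho>" "\<rho> \<le> r"
    then have "\<rho> < top" using assms by auto
    then show "slow_gauge d a h r / r ^ d \<le> slow_gauge d a h \<rho> / \<rho> ^ d"
      using slow_gauge_divide_power[OF assms(1,2)] slow_gauge_divide_power[OF \<rho>(1)] \<rho> anti
      by (simp add: sublin_mono)
  qed
  moreover have "r \<noteq> 0" "r \<noteq> top" using assms by auto
  ultimately show ?thesis by (simp add: slow_gauge_def)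
qed

lemma slow_gauge_tendsto_0:
  assumes "d \<noteq> 0" and bounded: "eventually (\<lambda>r. r ^ d * h r \<le> 1) (at_right 0)"
  shows "(slow_gauge d a h \<longlongrightarrow> 0) (at_right 0)"
proof (rule tendsto_zero_ennreal)
  fix t :: real assume t: "0 < t"
  obtain K :: nat where "2 / t < real K" using reals_Archimedean2 by blast
  then have Kt: "1 / real (Suc K) < t / 2" using t by (simp add: field_simps)
  let ?e = "ennreal (1 / real (Suc K))"
  have "eventually (\<lambda>r. r ^ d * ennreal (a K) < ennreal (t / 2)) (at_right 0)"
    using t by (intro eventually_power_mult_less assms) auto
  with bounded eventually_at_right_0_less_1
  show "eventually (\<lambda>r. slow_gauge d a h r < ennreal t) (at_right 0)"
  proof eventually_elim
    case (elim r)
    then have r: "r \<noteq> 0" "r \<noteq> top" using ennreal_one_less_top by auto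
    obtain x where x: "r ^ d * ennreal (a K) = ennreal x" "0 \<le> x" "x < t / 2"
      using elim(3) by (cases "r ^ d * ennreal (a K)") (auto simp: ennreal_less_iff)
    have "slow_gauge d a h r = r ^ d * sublin a (h r)" using r by (simp add: slow_gauge_def)
    also have "\<dots> \<le> r ^ d * (h r * ?e + ennreal (a K))" by (intro mult_left_mono sublin_le) auto
    also have "\<dots> = (r ^ d * h r) * ?e + r ^ d * ennreal (a K)"
      by (simp add: distrib_left mult.assoc)
    also have "\<dots> \<le> 1 * ?e + ennreal x"
      using elim x by (intro add_mono mult_right_mono) auto
    also have "\<dots> = ennreal (1 / real (Suc K) + x)" using x by (simp add: ennreal_plus)
    also have "\<dots> < ennreal t" using Kt x by (subst ennreal_less_iff) auto
    finally show ?case .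
  qed
qed

lemma slow_gauge_mono_on:
  assumes "growing_seq a" "e < top"
    and mono: "\<And>r s. 0 < r \<Longrightarrow> r \<le> s \<Longrightarrow> s \<le> e \<Longrightarrow> r ^ d * h r \<le> s ^ d * h s"
  shows "mono_on {0..e} (slow_gauge d a h)"
proof (rule mono_onI)
  fix r s assume rs: "r \<in> {0..e}" "s \<in> {0..e}" "r \<le> s"
  show "slow_gauge d a h r \<le> slow_gauge d a h s"
  proof (cases "r = 0")
    case False
    then have "0 < r" "0 < s" "s < top" "r < top" using rs assms(2) by (auto simp: zero_less_iff_neq_zero)
    moreover have "r ^ d * sublin a (h r) \<le> s ^ d * sublin a (h s)"
      using rs \<open>0 < r\<close> \<open>s < top\<close>
      by (intro mult_sublin_mono power_mono mono) (auto simp: power_less_top_ennreal)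
    ultimately show ?thesis by (auto simp: slow_gauge_def)
  qed (simp add: slow_gauge_def)
qed

lemma ell_slow_gauge:
  assumes "growing_seq a" "(h \<longlongrightarrow> top) (at_right 0)"
  shows "ell d (slow_gauge d a h) = top"
proof -
  have "ell d (slow_gauge d a h) = Liminf (at_right 0) (\<lambda>r. sublin a (h r))"
    unfolding ell_def
  proof (rule Liminf_eq)
    show "\<forall>\<^sub>F r in at_right 0. slow_gauge d a h r / r ^ d = sublin a (h r)"
      using eventually_at_right_0_less_1
      by eventually_elim (auto intro!: slow_gauge_divide_power dest: order.strict_trans[OF _ ennreal_one_less_top])
  qed
  also have "\<dots> = top"
    by (rule lim_imp_Liminf[OF at_right_0_ennreal_neq_bot sublin_tendsto_top[OF assms]])
  finally show ?thesis .
qed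

lemma dnorm_divide_dnorm_slow_gauge:
  assumes "0 < r" "r < top"
  shows "dnorm d g r / dnorm d (slow_gauge d a (inf_ratio d g)) r
    = inf_ratio d g r / sublin a (inf_ratio d g r)"
proof -
  have "dnorm d g r = r ^ d * inf_ratio d g r" using assms by (rule dnorm_eq_inf_ratio)
  moreover have "dnorm d (slow_gauge d a (inf_ratio d g)) r = r ^ d * sublin a (inf_ratio d g r)"
    using assms inf_ratio_antimono by (rule dnorm_slow_gauge)
  ultimately show ?thesis
    using ennreal_mult_divide_mult_cancel[OF ennreal_power_neq_0_top[OF assms]] by simp
qed

lemma gprec_dnorm_slow_gauge:
  assumes a: "growing_seq a" and g: "g \<in> gauge_inf d"
  shows "gprec (dnorm d g) (dnorm d (slow_gauge d a (inf_ratio d g)))"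
proof -
  let ?h = "inf_ratio d g"
  obtain b where b: "0 < b" "b \<le> 1" "\<And>r. 0 < r \<Longrightarrow> r < b \<Longrightarrow> ?h r < top"
    using inf_ratio_less_top_near_0[of g d] g by (auto simp: gauge_inf_def)
  have r_top: "r < top" if "r < b" for r
    using less_imp_le[OF less_le_trans[OF that b(2)]] by (rule ennreal_less_top_if_le_1)
  note ratio = dnorm_divide_dnorm_slow_gauge[of _ d g a]
  show ?thesis
  proof (rule gprecI[OF b(1)])
    fix r s :: ennreal assume rs: "0 < r" "r \<le> s" "s < b"
    have "?h s / sublin a (?h s) \<le> ?h r / sublin a (?h r)"
      using rs by (intro divide_sublin_mono a inf_ratio_antimono b(3)) auto
    then show "dnorm d g s / dnorm d (slow_gauge d a ?h) s \<le> dnorm d g r / dnorm d (slow_gauge d a ?h) r"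
      using rs r_top ratio by auto
  next
    have "eventually (\<lambda>r. ?h r / sublin a (?h r) = dnorm d g r / dnorm d (slow_gauge d a ?h) r) (at_right 0)"
      using eventually_at_right_0_less_1
      by eventually_elim (auto simp: ratio dest: order.strict_trans[OF _ ennreal_one_less_top])
    moreover have "eventually (\<lambda>r. ?h r < top) (at_right 0)"
      unfolding eventually_at_right_0_ennreal using b by blast
    then have "((\<lambda>r. ?h r / sublin a (?h r)) \<longlongrightarrow> top) (at_right 0)"
      using g by (intro divide_sublin_tendsto_top a inf_ratio_tendsto_top) (auto simp: gauge_inf_def)
    ultimately show "((\<lambda>r. dnorm d g r / dnorm d (slow_gauge d a ?h) r) \<longlongrightarrow> top) (at_right 0)"
      by (rule tendsto_cong[THEN iffD1])
  qed
qed

context Rd_measure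
begin

lemma exists_growing_seq_nn_integral_sublin:
  assumes anti: "\<And>x y. x \<le> y \<Longrightarrow> h y \<le> h x"
    and diverges: "(\<integral>\<^sup>+ r. ennreal r ^ d * h (ennreal r) \<partial>M) = \<infinity>"
  shows "\<exists>a. growing_seq a \<and> (\<integral>\<^sup>+ r. ennreal r ^ d * sublin a (h (ennreal r)) \<partial>M) = \<infinity>"
proof -
  have [measurable]: "(\<lambda>r. h (ennreal r)) \<in> borel_measurable M"
    by (rule borel_measurable_M[OF borel_measurable_antimono_ennreal[OF anti]])
  define J where "J n = (\<integral>\<^sup>+ r. ennreal r ^ d * min (h (ennreal r)) (of_nat n) \<partial>M)" for n :: nat
  have "(SUP n. J n) = (\<integral>\<^sup>+ r. (SUP n. ennreal r ^ d * min (h (ennreal r)) (of_nat n)) \<partial>M)"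
    unfolding J_def
    by (rule nn_integral_monotone_convergence_SUP[symmetric])
       (auto intro!: monoI le_funI mult_left_mono min.mono)
  also have "\<dots> = \<infinity>"
    using diverges by (simp add: SUP_mult_left_ennreal[symmetric] SUP_min_of_nat_ennreal)
  finally have "\<exists>n. of_nat (Suc K * K) < J n" for K
    using of_nat_less_top[of "Suc K * K"] by (simp add: less_SUP_iff)
  then obtain n where n: "\<And>K. of_nat (Suc K * K) < J (n K)" by metis
  obtain a where a: "growing_seq a" "\<And>K. real (n K) \<le> a K" using growing_seq_above by blast
  have "of_nat K \<le> (\<integral>\<^sup>+ r. ennreal r ^ d * sublin a (h (ennreal r)) \<partial>M)" for K
  proof -
    let ?e = "ennreal (1 / real (Suc K))"
    have "real K = 1 / real (Suc K) * real (Suc K * K)"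
      by (simp only: of_nat_mult) simp
    then have "(of_nat K :: ennreal) = ?e * of_nat (Suc K * K)"
      by (simp only: ennreal_of_nat_eq_real_of_nat ennreal_mult[symmetric] of_nat_0_le_iff
          divide_nonneg_nonneg zero_le_one)
    also have "\<dots> \<le> ?e * J (n K)" using n[of K] by (intro mult_left_mono) auto
    also have "\<dots> = (\<integral>\<^sup>+ r. ennreal r ^ d * (?e * min (h (ennreal r)) (of_nat (n K))) \<partial>M)"
      unfolding J_def by (subst nn_integral_cmult[symmetric]) (auto simp: mult.left_commute)
    also have "\<dots> \<le> (\<integral>\<^sup>+ r. ennreal r ^ d * sublin a (h (ennreal r)) \<partial>M)"
      by (intro nn_integral_mono mult_left_mono truncation_le_sublin a) auto
    finally show ?thesis .
  qed
  then show ?thesis using ennreal_eq_top_if_of_nat_le a(1) by auto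
qed

lemma exists_slow_gauge_in_gauge_n:
  assumes anti: "\<And>x y. x \<le> y \<Longrightarrow> h y \<le> h x" and h_top: "(h \<longlongrightarrow> top) (at_right 0)"
    and e: "0 < e" "e \<le> 1"
    and mono: "\<And>r s. 0 < r \<Longrightarrow> r \<le> s \<Longrightarrow> s \<le> e \<Longrightarrow> r ^ d * h r \<le> s ^ d * h s"
    and bounded: "eventually (\<lambda>r. r ^ d * h r \<le> 1) (at_right 0)"
    and diverges: "(\<integral>\<^sup>+ r. ennreal r ^ d * h (ennreal r) \<partial>M) = \<infinity>"
  shows "\<exists>a. growing_seq a \<and> slow_gauge d a h \<in> gauge_n d M"
proof -
  obtain a where a: "growing_seq a"
    and int: "(\<integral>\<^sup>+ r. ennreal r ^ d * sublin a (h (ennreal r)) \<partial>M) = \<infinity>"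
    using exists_growing_seq_nn_integral_sublin[OF anti diverges] by blast
  have "e < top" using e(2) ennreal_one_less_top by (rule le_less_trans)
  then have "slow_gauge d a h \<in> gauge"
    using slow_gauge_mono_on[OF a _ mono] slow_gauge_tendsto_0[OF d_neq_0 bounded] e(1)
    unfolding gauge_def by (auto simp: slow_gauge_def)
  moreover have "(\<integral>\<^sup>+ r. dnorm d (slow_gauge d a h) (ennreal r) \<partial>M) = \<infinity>"
    using int by (subst nn_integral_cong[where v="\<lambda>r. ennreal r ^ d * sublin a (h (ennreal r))"])
      (auto simp: space_M intro!: dnorm_slow_gauge anti)
  ultimately show ?thesis
    using a ell_slow_gauge[OF a h_top] by (auto simp: gauge_n_def gauge_inf_def)
qed

lemma gauge_n_right_step:
  assumes g: "g \<in> gauge_n d M"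
  shows "\<exists>g'\<in>gauge_n d M. gprec (dnorm d g) (dnorm d g')"
proof -
  let ?h = "inf_ratio d g"
  have gauge: "g \<in> gauge" and g_inf: "g \<in> gauge_inf d"
    using g by (auto simp: gauge_n_def gauge_inf_def)
  have dnorm_eq: "r ^ d * ?h r = dnorm d g r" if "0 < r" "r \<le> 1" for r
    using that le_less_trans[OF that(2) ennreal_one_less_top] by (intro dnorm_eq_inf_ratio[symmetric])
  obtain e where e: "0 < e" "e \<le> 1" "mono_on {0..e} (dnorm d g)"
    using dnorm_mono_near_0[OF gauge] by blast
  obtain b where b: "0 < b" "b \<le> 1" "\<And>r. 0 < r \<Longrightarrow> r < b \<Longrightarrow> dnorm d g r < 1"
    using gauge_less_1_near_0[OF dnorm_in_gauge[OF gauge, of d]] by blast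
  have "\<exists>a. growing_seq a \<and> slow_gauge d a ?h \<in> gauge_n d M"
  proof (rule exists_slow_gauge_in_gauge_n[OF inf_ratio_antimono _ e(1,2)])
    show "(?h \<longlongrightarrow> top) (at_right 0)"
      using g_inf by (intro inf_ratio_tendsto_top) (simp add: gauge_inf_def)
    show "r ^ d * ?h r \<le> s ^ d * ?h s" if "0 < r" "r \<le> s" "s \<le> e" for r s
      using that e by (auto simp: dnorm_eq intro!: mono_onD[OF e(3)])
    show "\<forall>\<^sub>F r in at_right 0. r ^ d * ?h r \<le> 1"
      unfolding eventually_at_right_0_ennreal using b
      by (intro exI[of _ b]) (auto simp: dnorm_eq intro: less_imp_le)
    show "(\<integral>\<^sup>+ r. ennreal r ^ d * ?h (ennreal r) \<partial>M) = \<infinity>"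
      using g by (simp add: gauge_n_def nn_integral_dnorm_eq)
  qed
  then show ?thesis using gprec_dnorm_slow_gauge[OF _ g_inf] by blast
qed

lemma gauge_n_nonempty: "gauge_n d M \<noteq> {}"
proof -
  define h :: "ennreal \<Rightarrow> ennreal" where "h = (\<lambda>r. inverse (r ^ d))"
  have one: "r ^ d * h r = 1" if "0 < r" "r < top" for r
    using ennreal_power_neq_0_top[OF that, of d] ennreal_divide_self[of "r ^ d"]
    by (simp add: h_def divide_ennreal_def top.not_eq_extremum)
  have "\<exists>a. growing_seq a \<and> slow_gauge d a h \<in> gauge_n d M"
  proof (rule exists_slow_gauge_in_gauge_n[of h 1])
    show "h y \<le> h x" if "x \<le> y" for x y
      unfolding h_def using that by (intro ennreal_inverse_antimono power_mono) auto
    have "((\<lambda>r::ennreal. r ^ d) \<longlongrightarrow> 0 ^ d) (at_right 0)" by (rule tendsto_power_ennreal)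
    then have "(h \<longlongrightarrow> inverse (0 ^ d)) (at_right 0)"
      unfolding h_def
      by (rule continuous_on_tendsto_compose[OF continuous_on_inverse_ennreal[OF continuous_on_id[of UNIV]]]) auto
    then show "(h \<longlongrightarrow> top) (at_right 0)" using d_neq_0 by (simp add: zero_power)
    show "r ^ d * h r \<le> s ^ d * h s" if "0 < r" "r \<le> s" "s \<le> 1" for r s
      using that one ennreal_one_less_top by (simp add: le_less_trans)
    show "\<forall>\<^sub>F r in at_right 0. r ^ d * h r \<le> 1"
      using eventually_at_right_0_less_1
      by eventually_elim (simp add: one order.strict_trans[OF _ ennreal_one_less_top])
    have "(\<integral>\<^sup>+ r. ennreal r ^ d * h (ennreal r) \<partial>M) = (\<integral>\<^sup>+ r. 1 \<partial>M)"
      by (rule nn_integral_cong) (auto simp: space_M intro!: one)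
    then show "(\<integral>\<^sup>+ r. ennreal r ^ d * h (ennreal r) \<partial>M) = \<infinity>"
      using emeasure_space_M by simp
  qed auto
  then show ?thesis by blast
qed

end

section \<open>Boosting a gauge: left-openness of the complement of G(n)\<close>

definition trunc_sum :: "(nat \<Rightarrow> real) \<Rightarrow> ennreal \<Rightarrow> ennreal" where
  "trunc_sum a x = (\<Sum>k. min x (ennreal (a k)))"

lemma trunc_sum_0 [simp]: "trunc_sum a 0 = 0"
  by (simp add: trunc_sum_def)

lemma trunc_sum_mono: "x \<le> y \<Longrightarrow> trunc_sum a x \<le> trunc_sum a y"
  unfolding trunc_sum_def by (intro suminf_le summableI min.mono) auto

lemma trunc_sum_cross_le:
  fixes x z :: ennreal assumes "x \<le> z" shows "trunc_sum a z * x \<le> trunc_sum a x * z"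
proof -
  have "min z c * x \<le> min x c * z" for c :: ennreal
  proof (cases "c \<le> x")
    case True
    then show ?thesis using assms by (simp add: min_absorb2 mult_left_mono)
  next
    case False
    then have "min x c = x" by simp
    moreover have "min z c * x \<le> z * x" by (intro mult_right_mono) auto
    ultimately show ?thesis by (simp add: mult.commute)
  qed
  then have "(\<Sum>k. min z (ennreal (a k)) * x) \<le> (\<Sum>k. min x (ennreal (a k)) * z)"
    by (intro suminf_le summableI)
  then show ?thesis unfolding trunc_sum_def by (simp add: ennreal_suminf_multc)
qed

lemma trunc_sum_divide_antimono:
  assumes "0 < x" "x \<le> z" "z < top"
  shows "trunc_sum a z / z \<le> trunc_sum a x / x"
  using assms by (intro ennreal_divide_le_divide_cross trunc_sum_cross_le) auto

lemma of_nat_mult_le_trunc_sum: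
  assumes "\<And>k. 0 < a k" shows "\<exists>\<delta>>0. \<forall>x\<le>\<delta>. of_nat N * x \<le> trunc_sum a x"
proof -
  define m where "m = Min (insert 1 (a ` {..<N}))"
  have m: "0 < m" "\<And>k. k < N \<Longrightarrow> m \<le> a k" using assms by (auto simp: m_def)
  have "of_nat N * x \<le> trunc_sum a x" if "x \<le> ennreal m" for x
  proof -
    have "of_nat N * x = (\<Sum>k<N. min x (ennreal (a k)))"
      using that m(2) by (simp add: min_absorb1 order_trans[OF _ ennreal_leI])
    also have "\<dots> \<le> trunc_sum a x" unfolding trunc_sum_def by (intro sum_le_suminf summableI) auto
    finally show ?thesis .
  qed
  then show ?thesis using m(1) by (intro exI[of _ "ennreal m"]) auto
qed

lemma trunc_sum_divide_tendsto_top: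
  assumes "\<And>k. 0 < a k" and "(f \<longlongrightarrow> 0) F" and "eventually (\<lambda>x. 0 < f x \<and> f x < top) F"
  shows "((\<lambda>x. trunc_sum a (f x) / f x) \<longlongrightarrow> top) F"
  unfolding tendsto_top_iff_ennreal
proof (intro allI impI)
  fix l :: real assume l: "0 \<le> l"
  obtain N :: nat where N: "l < real N" using reals_Archimedean2 by blast
  obtain \<delta> where \<delta>: "\<delta> > 0" "\<forall>x\<le>\<delta>. of_nat N * x \<le> trunc_sum a x"
    using of_nat_mult_le_trunc_sum[of a N] assms(1) by blast
  have "eventually (\<lambda>x. f x < \<delta>) F" using assms(2) \<delta>(1) by (rule order_tendstoD)
  with assms(3) show "eventually (\<lambda>x. ennreal l < trunc_sum a (f x) / f x) F"
  proof eventually_elim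
    case (elim x)
    then have "f x \<noteq> 0" "f x \<noteq> top" by auto
    then have "of_nat N \<le> trunc_sum a (f x) / f x"
      using elim \<delta>(2) by (simp add: ennreal_le_divide_iff)
    moreover have "ennreal l < of_nat N" using N l
      by (simp add: ennreal_of_nat_eq_real_of_nat ennreal_less_iff)
    ultimately show ?case by simp
  qed
qed

lemma trunc_sum_small:
  assumes "(\<Sum>k. ennreal (a k)) < \<infinity>" "0 < u" shows "\<exists>\<delta>>0. trunc_sum a \<delta> < u"
proof -
  have "(\<integral>\<^sup>+ k. ennreal (a k) \<partial>count_space UNIV) < \<infinity>"
    using assms(1) by (simp add: nn_integral_count_space_nat)
  then have "(INF i. \<integral>\<^sup>+ k. min (ennreal (a k)) (ennreal (1 / real (Suc i))) \<partial>count_space UNIV) = 0"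
    by (intro nn_integral_min_inverse_Suc_INF) simp
  then have "(INF i. \<integral>\<^sup>+ k. min (ennreal (a k)) (ennreal (1 / real (Suc i))) \<partial>count_space UNIV) < u"
    using assms(2) by simp
  then obtain i where "(\<integral>\<^sup>+ k. min (ennreal (a k)) (ennreal (1 / real (Suc i))) \<partial>count_space UNIV) < u"
    unfolding INF_less_iff by blast
  then have "trunc_sum a (ennreal (1 / real (Suc i))) < u"
    by (simp add: trunc_sum_def nn_integral_count_space_nat min.commute)
  then show ?thesis by (intro exI[of _ "ennreal (1 / real (Suc i))"]) auto
qed

definition boost_gauge :: "nat \<Rightarrow> (nat \<Rightarrow> real) \<Rightarrow> (ennreal \<Rightarrow> ennreal) \<Rightarrow> ennreal \<Rightarrow> ennreal" where
  "boost_gauge d a g r = (if r = top then top else trunc_sum a (dnorm d g r))"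

lemma boost_gauge_eq: "r \<noteq> top \<Longrightarrow> boost_gauge d a g r = trunc_sum a (dnorm d g r)"
  by (simp add: boost_gauge_def)

lemma boost_gauge_in_gauge:
  assumes g: "g \<in> gauge" and summable: "(\<Sum>k. ennreal (a k)) < \<infinity>"
  shows "boost_gauge d a g \<in> gauge"
proof -
  obtain e where e: "0 < e" "e \<le> 1" "mono_on {0..e} (dnorm d g)"
    using dnorm_mono_near_0[OF g] by blast
  have "mono_on {0..e} (boost_gauge d a g)"
  proof (rule mono_onI)
    fix r s assume rs: "r \<in> {0..e}" "s \<in> {0..e}" "r \<le> s"
    then have "s < top" "r < top" using e(2) by (auto intro: ennreal_less_top_if_le_1)
    then show "boost_gauge d a g r \<le> boost_gauge d a g s"
      using rs by (auto simp: boost_gauge_def intro!: trunc_sum_mono mono_onD[OF e(3)])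
  qed
  moreover have "(boost_gauge d a g \<longlongrightarrow> 0) (at_right 0)"
  proof (rule order_tendstoI)
    fix u :: ennreal assume "0 < u"
    then obtain \<delta> where \<delta>: "\<delta> > 0" "trunc_sum a \<delta> < u" using trunc_sum_small[OF summable] by blast
    have "(dnorm d g \<longlongrightarrow> 0) (at_right 0)" using dnorm_in_gauge[OF g] by (simp add: gauge_def)
    then have "eventually (\<lambda>r. dnorm d g r < \<delta>) (at_right 0)" using \<delta>(1) by (rule order_tendstoD)
    with eventually_at_right_0_less_1 show "eventually (\<lambda>r. boost_gauge d a g r < u) (at_right 0)"
    proof eventually_elim
      case (elim r)
      then have "r \<noteq> top" using ennreal_less_top_if_le_1[of r] by auto
      then have "boost_gauge d a g r \<le> trunc_sum a \<delta>"
        using elim by (simp add: boost_gauge_eq trunc_sum_mono)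
      then show ?case using \<delta>(2) by simp
    qed
  qed simp
  ultimately show ?thesis using e(1) unfolding gauge_def by (auto simp: boost_gauge_def)
qed

lemma ell_le_ell_boost_gauge:
  assumes g: "g \<in> gauge" and pos: "\<And>k. 0 < a k"
  shows "ell d g \<le> ell d (boost_gauge d a g)"
proof -
  obtain \<delta> where \<delta>: "\<delta> > 0" "\<forall>x\<le>\<delta>. of_nat 1 * x \<le> trunc_sum a x"
    using of_nat_mult_le_trunc_sum[of a 1] pos by blast
  have "(dnorm d g \<longlongrightarrow> 0) (at_right 0)" using dnorm_in_gauge[OF g] by (simp add: gauge_def)
  then have "eventually (\<lambda>r. dnorm d g r < \<delta>) (at_right 0)" using \<delta>(1) by (rule order_tendstoD)
  with eventually_at_right_0_less_1
  have "\<forall>\<^sub>F r in at_right 0. dnorm d g r / r ^ d \<le> boost_gauge d a g r / r ^ d"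
  proof eventually_elim
    case (elim r)
    then have "r \<noteq> top" using ennreal_less_top_if_le_1[of r] by auto
    then have "dnorm d g r \<le> boost_gauge d a g r"
      using elim \<delta>(2) by (simp add: boost_gauge_eq)
    then show ?case by (rule divide_right_mono_ennreal)
  qed
  then have "ell d (dnorm d g) \<le> ell d (boost_gauge d a g)"
    unfolding ell_def by (rule Liminf_mono)
  then show ?thesis by (simp add: ell_dnorm)
qed

lemma dnorm_boost_gauge:
  assumes r: "0 < r" "r < e" and e: "e \<le> 1" "mono_on {0..e} (dnorm d g)"
    and pos_fin: "\<And>\<rho>. 0 < \<rho> \<Longrightarrow> \<rho> < e \<Longrightarrow> 0 < dnorm d g \<rho> \<and> dnorm d g \<rho> < top"
  shows "dnorm d (boost_gauge d a g) r = trunc_sum a (dnorm d g r)"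
proof -
  have top: "x < top" if "x < e" for x using less_imp_le[OF less_le_trans[OF that e(1)]] by (rule ennreal_less_top_if_le_1)
  \<comment> \<open>a product of two factors that are both antitone in x\<close>
  have ratio: "boost_gauge d a g x / x ^ d = trunc_sum a (dnorm d g x) / dnorm d g x * inf_ratio d g x"
    if "0 < x" "x < e" for x
  proof -
    have "boost_gauge d a g x / x ^ d = trunc_sum a (dnorm d g x) / x ^ d"
      using top[OF that(2)] by (simp add: boost_gauge_eq)
    also have "\<dots> = trunc_sum a (dnorm d g x) / dnorm d g x * (dnorm d g x / x ^ d)"
      using pos_fin[OF that] by (intro ennreal_divide_eq_divide_mult_divide) auto
    also have "dnorm d g x / x ^ d = inf_ratio d g x" using that(1) top[OF that(2)] by (rule dnorm_divide_power)
    finally show ?thesis .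
  qed
  have "dnorm d (boost_gauge d a g) r = boost_gauge d a g r"
  proof (rule dnorm_eq_self[OF r(1) top[OF r(2)]])
    fix \<rho> :: ennreal assume \<rho>: "0 < \<rho>" "\<rho> \<le> r"
    have \<rho>e: "\<rho> < e" using \<rho>(2) r(2) by (rule le_less_trans)
    have "trunc_sum a (dnorm d g r) / dnorm d g r \<le> trunc_sum a (dnorm d g \<rho>) / dnorm d g \<rho>"
      using pos_fin[OF \<rho>(1) \<rho>e] pos_fin[OF r] \<rho> r
      by (intro trunc_sum_divide_antimono mono_onD[OF e(2)]) (auto intro: less_imp_le[OF le_less_trans])
    then show "boost_gauge d a g r / r ^ d \<le> boost_gauge d a g \<rho> / \<rho> ^ d"
      unfolding ratio[OF r] ratio[OF \<rho>(1) \<rho>e] by (intro mult_mono inf_ratio_antimono \<rho>(2)) auto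
  qed
  then show ?thesis using top[OF r(2)] by (simp add: boost_gauge_eq)
qed

lemma gprec_dnorm_boost_gauge:
  assumes g: "g \<in> gauge_star d" and pos: "\<And>k. 0 < a k"
  shows "gprec (dnorm d (boost_gauge d a g)) (dnorm d g)"
proof -
  obtain e where e: "0 < e" "e \<le> 1" "mono_on {0..e} (dnorm d g)"
    and pos_fin: "\<And>r. 0 < r \<Longrightarrow> r < e \<Longrightarrow> 0 < dnorm d g r \<and> dnorm d g r < top"
    using dnorm_pos_finite_near_0[OF g] by blast
  have ratio: "dnorm d (boost_gauge d a g) r / dnorm d g r = trunc_sum a (dnorm d g r) / dnorm d g r"
    if "0 < r" "r < e" for r
    using dnorm_boost_gauge[OF that e(2,3) pos_fin] by simp
  show ?thesis
  proof (rule gprecI[OF e(1)])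
    fix r s :: ennreal assume rs: "0 < r" "r \<le> s" "s < e"
    have "r < e" "0 < s" using rs by auto
    then show "dnorm d (boost_gauge d a g) s / dnorm d g s \<le> dnorm d (boost_gauge d a g) r / dnorm d g r"
      using pos_fin[of r] pos_fin[of s] rs unfolding ratio[OF rs(1) \<open>r < e\<close>] ratio[OF \<open>0 < s\<close> rs(3)]
      by (intro trunc_sum_divide_antimono mono_onD[OF e(3)]) (auto intro: less_imp_le)
  next
    have "((\<lambda>r. trunc_sum a (dnorm d g r) / dnorm d g r) \<longlongrightarrow> top) (at_right 0)"
    proof (rule trunc_sum_divide_tendsto_top[OF pos])
      show "(dnorm d g \<longlongrightarrow> 0) (at_right 0)"
        using dnorm_in_gauge[of g d] g by (simp add: gauge_def gauge_star_def)
      show "\<forall>\<^sub>F r in at_right 0. 0 < dnorm d g r \<and> dnorm d g r < top"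
        unfolding eventually_at_right_0_ennreal using e(1) pos_fin by blast
    qed
    moreover have "\<forall>\<^sub>F r in at_right 0. trunc_sum a (dnorm d g r) / dnorm d g r
        = dnorm d (boost_gauge d a g) r / dnorm d g r"
      unfolding eventually_at_right_0_ennreal using e(1) ratio by (metis (no_types))
    ultimately show "((\<lambda>r. dnorm d (boost_gauge d a g) r / dnorm d g r) \<longlongrightarrow> top) (at_right 0)"
      by (rule tendsto_cong[THEN iffD1, rotated])
  qed
qed

context Rd_measure
begin

lemma nn_integral_dnorm_finite:
  assumes "g \<in> gauge_star d - gauge_n d M"
  shows "(\<integral>\<^sup>+ r. dnorm d g (ennreal r) \<partial>M) < \<infinity>"
proof (cases "ell d g = top")
  case True
  then show ?thesis using assms by (simp add: gauge_star_def gauge_n_def gauge_inf_def less_top)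
next
  case False
  have "(\<integral>\<^sup>+ r. dnorm d g (ennreal r) \<partial>M) \<le> (\<integral>\<^sup>+ r. ennreal r ^ d * ell d g \<partial>M)"
    unfolding nn_integral_dnorm_eq
    by (intro nn_integral_mono mult_left_mono inf_ratio_le_ell) (auto simp: space_M)
  also have "\<dots> = (\<integral>\<^sup>+ r. ennreal r ^ d \<partial>M) * ell d g" by (rule nn_integral_multc) measurable
  also have "\<dots> < \<infinity>"
    using nn_integral_power_finite False by (simp add: ennreal_mult_less_top less_top)
  finally show ?thesis .
qed

lemma exists_summable_truncation_seq:
  assumes [measurable]: "f \<in> borel_measurable M" and "(\<integral>\<^sup>+ r. f r \<partial>M) < \<infinity>"
  shows "\<exists>a. (\<forall>k. 0 < a k) \<and> (\<forall>k. a k \<le> (1/2) ^ k) \<and>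
             (\<forall>k. (\<integral>\<^sup>+ r. min (f r) (ennreal (a k)) \<partial>M) \<le> ennreal ((1/2) ^ k))"
proof -
  have "(INF i. \<integral>\<^sup>+ r. min (f r) (ennreal (1 / real (Suc i))) \<partial>M) < ennreal ((1/2) ^ k)" for k
    using nn_integral_min_inverse_Suc_INF[OF assms] by simp
  then have "\<exists>i. (\<integral>\<^sup>+ r. min (f r) (ennreal (1 / real (Suc i))) \<partial>M) < ennreal ((1/2) ^ k)" for k
    unfolding INF_less_iff by blast
  then obtain i where i: "\<And>k. (\<integral>\<^sup>+ r. min (f r) (ennreal (1 / real (Suc (i k)))) \<partial>M) < ennreal ((1/2) ^ k)"
    by metis
  define a where "a k = min (1 / real (Suc (i k))) ((1/2) ^ k)" for k
  have "(\<integral>\<^sup>+ r. min (f r) (ennreal (a k)) \<partial>M) \<le> ennreal ((1/2) ^ k)" for k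
  proof -
    have "(\<integral>\<^sup>+ r. min (f r) (ennreal (a k)) \<partial>M) \<le> (\<integral>\<^sup>+ r. min (f r) (ennreal (1 / real (Suc (i k)))) \<partial>M)"
      by (intro nn_integral_mono min.mono order_refl ennreal_leI) (simp add: a_def)
    then show ?thesis using i[of k] by simp
  qed
  then show ?thesis by (intro exI[of _ a]) (auto simp: a_def)
qed

lemma gauge_star_diff_gauge_n_left_step:
  assumes g: "g \<in> gauge_star d - gauge_n d M"
  shows "\<exists>g'\<in>gauge_star d - gauge_n d M. gprec (dnorm d g') (dnorm d g)"
proof -
  have g_star: "g \<in> gauge_star d" using g by blast
  then have gauge: "g \<in> gauge" and ell: "0 < ell d g" by (auto simp: gauge_star_def)
  obtain a where pos: "\<And>k. 0 < a k" and small: "\<And>k. a k \<le> (1/2) ^ k"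
    and trunc: "\<And>k. (\<integral>\<^sup>+ r. min (dnorm d g (ennreal r)) (ennreal (a k)) \<partial>M) \<le> ennreal ((1/2) ^ k)"
    using exists_summable_truncation_seq[OF borel_measurable_dnorm nn_integral_dnorm_finite[OF g]] by blast
  let ?g' = "boost_gauge d a g"
  have "(\<Sum>k. ennreal (a k)) \<le> 2" using small by (intro suminf_le_2_if_le_half_power ennreal_leI)
  then have "?g' \<in> gauge" using gauge by (intro boost_gauge_in_gauge) (auto simp: le_less_trans)
  moreover have "ell d g \<le> ell d ?g'" using gauge pos by (rule ell_le_ell_boost_gauge)
  ultimately have "?g' \<in> gauge_star d" using ell by (simp add: gauge_star_def)
  moreover have "(\<integral>\<^sup>+ r. dnorm d ?g' (ennreal r) \<partial>M) \<le> 2"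
  proof -
    have "(\<integral>\<^sup>+ r. dnorm d ?g' (ennreal r) \<partial>M) \<le> (\<integral>\<^sup>+ r. trunc_sum a (dnorm d g (ennreal r)) \<partial>M)"
      by (intro nn_integral_mono) (auto simp: space_M boost_gauge_eq intro!: dnorm_le[THEN order.trans])
    also have "\<dots> = (\<Sum>k. \<integral>\<^sup>+ r. min (dnorm d g (ennreal r)) (ennreal (a k)) \<partial>M)"
      unfolding trunc_sum_def by (rule nn_integral_suminf) measurable
    also have "\<dots> \<le> 2" using trunc by (rule suminf_le_2_if_le_half_power)
    finally show ?thesis .
  qed
  then have "?g' \<notin> gauge_n d M" by (auto simp: gauge_n_def top_unique)
  moreover have "gprec (dnorm d ?g') (dnorm d g)" using g_star pos by (rule gprec_dnorm_boost_gauge)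
  ultimately show ?thesis by blast
qed

end

theorem lemma7p9:
  fixes d :: nat and M :: "real measure"
  assumes "M \<in> meas_Rd d"
  shows "left_open d (gauge_star d - gauge_n d M) \<and>
         right_open d (gauge_n d M) \<and> gauge_n d M \<noteq> {}"
proof -
  interpret Rd_measure d M using assms by unfold_locales
  show ?thesis
    unfolding left_open_def right_open_def
    using d_normalized_gauge_star_diff_gauge_n d_normalized_gauge_n gauge_n_subset_gauge_inf
      gauge_star_diff_gauge_n_left_step gauge_n_right_step gauge_n_nonempty
    by blast
qed

end
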